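(* Let $\mathcal{O}$ be a field, $2\le m\le n$, $t = m-1$, $P = \mathcal{O}[X_{m\times n}]$, $I = \mathrm{I}_m(X)$, $J = (f_1,\ldots,f_{n-t})$ with $f_i = \det X_{[i,i+t]}$, and $\mathfrak{Q}_i = \mathrm{I}_t(X_{[i,i+t-1]})$. Then, as ideals of $P$, $$\mathfrak{Q}_2\mathfrak{Q}_3\cdots\mathfrak{Q}_{n-t} \subseteq (J :_P I),$$ i.e. $\mathfrak{Q}_2\cdots\mathfrak{Q}_{n-t}\, I \subseteq J$.
   Context: $P$ is the polynomial ring over $\mathcal{O}$ in the entries of an $m\times n$ matrix of indeterminates $X$; $\mathrm{I}_k(Y)$ is the ideal of $k\times k$ minors of $Y$; $X_{[a,b]}$ is the submatrix of $X$ consisting of columns $a$ through $b$ inclusive. An empty product of ideals is $P$. *)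

theory Defs
  imports "HOL-Library.Poly_Mapping" "Jordan_Normal_Form.Determinant"
begin

text \<open>Polynomial ring O[X_{m x n}]: polynomials in variables x_(i,j) (0-based row i, column j)
  represented as poly_mappings from monomials to coefficients; P is the subring of polynomials
  only involving the variables x_(i,j) with i < m, j < n.\<close>

type_synonym 'a mpoly = "((nat \<times> nat) \<Rightarrow>\<^sub>0 nat) \<Rightarrow>\<^sub>0 'a"

definition xvar :: "nat \<Rightarrow> nat \<Rightarrow> 'a::comm_ring_1 mpoly" where
  "xvar i j = Poly_Mapping.single (Poly_Mapping.single (i, j) 1) 1"

definition polyring :: "nat \<Rightarrow> nat \<Rightarrow> 'a::comm_ring_1 mpoly set" where
  "polyring m n = {q. \<forall>\<mu> \<in> Poly_Mapping.keys q. Poly_Mapping.keys \<mu> \<subseteq> {..<m} \<times> {..<n}}"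

definition genmat :: "nat \<Rightarrow> nat \<Rightarrow> 'a::comm_ring_1 mpoly mat" where
  "genmat m n = mat m n (\<lambda>(i, j). xvar i j)"

definition is_ideal_in :: "'a::comm_ring_1 set \<Rightarrow> 'a set \<Rightarrow> bool" where
  "is_ideal_in R I \<longleftrightarrow> I \<subseteq> R \<and> 0 \<in> I \<and> (\<forall>a\<in>I. \<forall>b\<in>I. a + b \<in> I)
     \<and> (\<forall>r\<in>R. \<forall>a\<in>I. r * a \<in> I)"

definition ideal_gen :: "'a::comm_ring_1 set \<Rightarrow> 'a set \<Rightarrow> 'a set" where
  "ideal_gen R S = \<Inter>{I. is_ideal_in R I \<and> S \<subseteq> I}"

definition ideal_prod :: "'a::comm_ring_1 set \<Rightarrow> 'a set \<Rightarrow> 'a set \<Rightarrow> 'a set" where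
  "ideal_prod R I K = ideal_gen R {a * b | a b. a \<in> I \<and> b \<in> K}"

definition ideal_prod_list :: "'a::comm_ring_1 set \<Rightarrow> 'a set list \<Rightarrow> 'a set" where
  "ideal_prod_list R Is = foldr (ideal_prod R) Is R"

definition ideal_colon :: "'a::comm_ring_1 set \<Rightarrow> 'a set \<Rightarrow> 'a set \<Rightarrow> 'a set" where
  "ideal_colon R J I = {x \<in> R. \<forall>a\<in>I. x * a \<in> J}"

definition minors :: "nat \<Rightarrow> 'a::comm_ring_1 mat \<Rightarrow> 'a set" where
  "minors k A = {det (mat k k (\<lambda>(a, b). A $$ (sorted_list_of_set Rs ! a, sorted_list_of_set Cs ! b)))
     | Rs Cs. Rs \<subseteq> {..<dim_row A} \<and> Cs \<subseteq> {..<dim_col A} \<and> card Rs = k \<and> card Cs = k}"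

definition minor_ideal :: "'a::comm_ring_1 set \<Rightarrow> nat \<Rightarrow> 'a mat \<Rightarrow> 'a set" where
  "minor_ideal R k A = ideal_gen R (minors k A)"

text \<open>X_{[a,b]}: columns a through b inclusive, columns numbered from 1 as in the paper.\<close>
definition colsub :: "'a mat \<Rightarrow> nat \<Rightarrow> nat \<Rightarrow> 'a mat" where
  "colsub A a b = mat (dim_row A) (Suc b - a) (\<lambda>(i, j). A $$ (i, a - 1 + j))"

end

theory Submission
  imports Defs
begin

text \<open>It suffices to treat generators. Fix generators g_v of the factors, i.e. (m-1)-minors
  of the m-1 consecutive columns v, ..., v+m-2 (counted from 0), and a maximal minor
  [f_0, ..., f_(m-1)] of X. Expanding g_v as a cofactor and using adj(B) B = det B writes
  g_v [f_0, ..., f_(m-1)] as a combination of the maximal minors [v, ..., v+m-2, f_j]. Such a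
  minor vanishes if f_j lies in the window, is a generator of J up to sign if f_j = v-1, and
  otherwise f_j \<ge> v+m-1, so the window can be moved one step to the right with the help of
  g_(v+1). It ends as a block of m consecutive columns, i.e. a generator of J. Starting at v = 1
  gives g_1 ... g_(n-m) [f_0, ..., f_(m-1)] \<in> J.\<close>

definition is_subring :: "'a::comm_ring_1 set \<Rightarrow> bool" where
  "is_subring R \<longleftrightarrow> 0 \<in> R \<and> 1 \<in> R \<and> (\<forall>a\<in>R. \<forall>b\<in>R. a + b \<in> R \<and> a * b \<in> R \<and> - a \<in> R)"

lemma is_subring_mult: "is_subring R \<Longrightarrow> a \<in> R \<Longrightarrow> b \<in> R \<Longrightarrow> a * b \<in> R"
  by (simp add: is_subring_def)

lemma is_subring_neg_one_power: "is_subring R \<Longrightarrow> (- 1) ^ k \<in> R"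
  by (induction k) (auto simp: is_subring_def)

lemma is_subring_sum: "is_subring R \<Longrightarrow> (\<And>i. i \<in> A \<Longrightarrow> f i \<in> R) \<Longrightarrow> sum f A \<in> R"
  by (induction A rule: infinite_finite_induct) (auto simp: is_subring_def)

lemma is_subring_prod: "is_subring R \<Longrightarrow> (\<And>i. i \<in> A \<Longrightarrow> f i \<in> R) \<Longrightarrow> prod f A \<in> R"
  by (induction A rule: infinite_finite_induct) (auto simp: is_subring_def)

lemma is_subring_prod_list:
  assumes "is_subring R"
  shows "list_all2 (\<in>) gs Ss \<Longrightarrow> \<forall>S\<in>set Ss. S \<subseteq> R \<Longrightarrow> prod_list gs \<in> R"
  by (induction rule: list_all2_induct) (use assms in \<open>auto simp: is_subring_def\<close>)

lemma ideal_in_zero: "is_ideal_in R K \<Longrightarrow> 0 \<in> K"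
  by (simp add: is_ideal_in_def)

lemma ideal_in_mult_left: "is_ideal_in R K \<Longrightarrow> r \<in> R \<Longrightarrow> a \<in> K \<Longrightarrow> r * a \<in> K"
  by (simp add: is_ideal_in_def)

lemma ideal_in_sum: "is_ideal_in R K \<Longrightarrow> (\<And>i. i \<in> A \<Longrightarrow> f i \<in> K) \<Longrightarrow> sum f A \<in> K"
  by (induction A rule: infinite_finite_induct) (auto simp: is_ideal_in_def)

lemma is_ideal_in_self: "is_subring R \<Longrightarrow> is_ideal_in R R"
  by (simp add: is_subring_def is_ideal_in_def)

lemma ideal_gen_superset: "S \<subseteq> ideal_gen R S"
  unfolding ideal_gen_def by blast

lemma ideal_gen_least: "is_ideal_in R K \<Longrightarrow> S \<subseteq> K \<Longrightarrow> ideal_gen R S \<subseteq> K"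
  unfolding ideal_gen_def by blast

lemma ideal_gen_mono: "S \<subseteq> T \<Longrightarrow> ideal_gen R S \<subseteq> ideal_gen R T"
  unfolding ideal_gen_def by blast

lemma ideal_gen_subset: "is_subring R \<Longrightarrow> S \<subseteq> R \<Longrightarrow> ideal_gen R S \<subseteq> R"
  by (rule ideal_gen_least[OF is_ideal_in_self])

lemma ideal_gen_is_ideal:
  assumes "is_subring R" "S \<subseteq> R"
  shows "is_ideal_in R (ideal_gen R S)"
  using ideal_gen_subset[OF assms] unfolding is_ideal_in_def ideal_gen_def by blast

lemma mult_ideal_gen_in_ideal:
  assumes R: "is_subring R" and K: "is_ideal_in R K" and "S \<subseteq> R"
    and S: "\<And>a. a \<in> S \<Longrightarrow> x * a \<in> K" and z: "z \<in> ideal_gen R S"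
  shows "x * z \<in> K"
proof -
  have "is_ideal_in R {a \<in> R. x * a \<in> K}"
    using R K unfolding is_subring_def is_ideal_in_def by (auto simp: distrib_left mult.left_commute)
  then have "ideal_gen R S \<subseteq> {a \<in> R. x * a \<in> K}"
    using \<open>S \<subseteq> R\<close> S by (intro ideal_gen_least) auto
  with z show ?thesis by blast
qed

lemma ideal_gen_mult_mem:
  assumes R: "is_subring R" and "S \<subseteq> R" "T \<subseteq> R"
    and a: "a \<in> ideal_gen R S" and b: "b \<in> ideal_gen R T"
  shows "a * b \<in> ideal_gen R {s * t | s t. s \<in> S \<and> t \<in> T}"
proof -
  let ?G = "ideal_gen R {s * t | s t. s \<in> S \<and> t \<in> T}"
  have G: "is_ideal_in R ?G"
    using assms by (intro ideal_gen_is_ideal) (auto intro: is_subring_mult)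
  have "t * a \<in> ?G" if "t \<in> T" for t
    using that ideal_gen_superset by (intro mult_ideal_gen_in_ideal[OF R G \<open>S \<subseteq> R\<close> _ a])
      (fastforce simp: mult.commute)
  then show ?thesis
    by (intro mult_ideal_gen_in_ideal[OF R G \<open>T \<subseteq> R\<close> _ b]) (simp add: mult.commute)
qed

lemma ideal_prod_list_subset_ideal_gen:
  assumes R: "is_subring R"
  shows "\<forall>S\<in>set Ss. S \<subseteq> R \<Longrightarrow>
    ideal_prod_list R (map (ideal_gen R) Ss) \<subseteq> ideal_gen R {prod_list gs | gs. list_all2 (\<in>) gs Ss}"
proof (induction Ss)
  case Nil
  have "r * 1 \<in> ideal_gen R {1}" if "r \<in> R" for r
    using R that ideal_gen_superset
    by (intro ideal_in_mult_left[OF ideal_gen_is_ideal]) (auto simp: is_subring_def)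
  then show ?case by (auto simp: ideal_prod_list_def)
next
  case (Cons S Ss)
  let ?T = "{prod_list gs | gs. list_all2 (\<in>) gs Ss}"
  let ?U = "{prod_list gs | gs. list_all2 (\<in>) gs (S # Ss)}"
  have S: "S \<subseteq> R" and T: "?T \<subseteq> R"
    using Cons.prems is_subring_prod_list[OF R] by auto
  have U: "is_ideal_in R (ideal_gen R ?U)"
    using Cons.prems is_subring_prod_list[OF R] by (intro ideal_gen_is_ideal[OF R]) auto
  have "{s * t | s t. s \<in> S \<and> t \<in> ?T} \<subseteq> ?U"
    by (force intro: exI[of _ "_ # _"])
  then have "a * b \<in> ideal_gen R ?U" if "a \<in> ideal_gen R S" "b \<in> ideal_gen R ?T" for a b
    using ideal_gen_mult_mem[OF R S T that] ideal_gen_mono by blast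
  then have "a * b \<in> ideal_gen R ?U"
    if "a \<in> ideal_gen R S" "b \<in> ideal_prod_list R (map (ideal_gen R) Ss)" for a b
    using that Cons by auto
  then have "ideal_gen R {a * b | a b. a \<in> ideal_gen R S \<and> b \<in> ideal_prod_list R (map (ideal_gen R) Ss)}
      \<subseteq> ideal_gen R ?U"
    by (intro ideal_gen_least[OF U]) blast
  then show ?case
    by (simp add: ideal_prod_list_def ideal_prod_def)
qed

lemma ideal_colon_is_ideal:
  "is_subring R \<Longrightarrow> is_ideal_in R J \<Longrightarrow> is_ideal_in R (ideal_colon R J I)"
  unfolding is_subring_def is_ideal_in_def ideal_colon_def by (auto simp: distrib_right mult.assoc)

lemma det_in_subring:
  assumes R: "is_subring R" and A: "A \<in> carrier_mat k k"
    and entries: "\<And>i j. i < k \<Longrightarrow> j < k \<Longrightarrow> A $$ (i, j) \<in> R"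
  shows "det A \<in> R"
proof -
  have "signof p * (\<Prod>i = 0..<k. A $$ (i, p i)) \<in> R" if p: "p permutes {0..<k}" for p
  proof -
    have "A $$ (i, p i) \<in> R" if "i \<in> {0..<k}" for i
      using permutes_in_image[OF p] entries that by auto
    moreover have "signof p \<in> R"
      using R by (auto simp: sign_def is_subring_def)
    ultimately show ?thesis
      using R by (intro is_subring_mult is_subring_prod) auto
  qed
  then show ?thesis
    unfolding det_def'[OF A] by (intro is_subring_sum[OF R]) auto
qed

lemma cofactor_in_subring:
  assumes R: "is_subring R" and A: "A \<in> carrier_mat k k"
    and entries: "\<And>i j. i < k \<Longrightarrow> j < k \<Longrightarrow> A $$ (i, j) \<in> R" and "r < k" "q < k"
  shows "cofactor A r q \<in> R"
proof -
  have "det (mat_delete A r q) \<in> R"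
    using A entries \<open>r < k\<close> \<open>q < k\<close>
    by (intro det_in_subring[OF R mat_delete_carrier[OF A]]) (auto simp: mat_delete_def)
  then show ?thesis
    unfolding cofactor_def using R by (intro is_subring_mult is_subring_neg_one_power)
qed

lemma sorted_list_of_set_nth_mem:
  "finite X \<Longrightarrow> a < card X \<Longrightarrow> sorted_list_of_set X ! a \<in> X"
  by (metis nth_mem set_sorted_list_of_set sorted_list_of_set.length_sorted_key_list_of_set)

lemma minors_subset_subring:
  assumes R: "is_subring R"
    and entries: "\<And>i j. i < dim_row B \<Longrightarrow> j < dim_col B \<Longrightarrow> B $$ (i, j) \<in> R"
  shows "minors k B \<subseteq> R"
proof
  fix d assume "d \<in> minors k B"
  then obtain Rs Cs
    where d: "d = det (mat k k
        (\<lambda>(a, b). B $$ (sorted_list_of_set Rs ! a, sorted_list_of_set Cs ! b)))"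
      and Rs: "Rs \<subseteq> {..<dim_row B}" "card Rs = k" and Cs: "Cs \<subseteq> {..<dim_col B}" "card Cs = k"
    unfolding minors_def by blast
  have "sorted_list_of_set Rs ! a < dim_row B" "sorted_list_of_set Cs ! b < dim_col B"
    if "a < k" "b < k" for a b
    using Rs Cs that sorted_list_of_set_nth_mem[of Rs a] sorted_list_of_set_nth_mem[of Cs b]
      finite_subset[OF Rs(1)] finite_subset[OF Cs(1)] by auto
  then show "d \<in> R"
    unfolding d by (intro det_in_subring[OF R]) (auto intro!: entries)
qed

lemma det_replace_col_eq_sum_cofactor:
  assumes A: "A \<in> carrier_mat k k" and p: "p < k" and v: "dim_vec v = k"
  shows "det (replace_col A v p) = (\<Sum>i<k. v $ i * cofactor A i p)"
proof -
  have C: "replace_col A v p \<in> carrier_mat k k"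
    using A by (simp add: replace_col_def)
  have "mat_delete (replace_col A v p) i p = mat_delete A i p" for i
    using A by (intro eq_matI) (auto simp: mat_delete_def replace_col_def)
  then show ?thesis
    using laplace_expansion_column[OF C p] A p v by (simp add: replace_col_def cofactor_def)
qed

lemma det_mult_cofactor_eq_sum_replace_col:
  fixes A B :: "'a::comm_ring_1 mat"
  assumes A: "A \<in> carrier_mat k k" and B: "B \<in> carrier_mat k k" and p: "p < k" and r: "r < k"
  shows "det B * cofactor A r p = (\<Sum>j<k. adj_mat B $$ (j, r) * det (replace_col A (col B j) p))"
proof -
  have B_adj: "(\<Sum>j<k. B $$ (i, j) * adj_mat B $$ (j, r)) = (if i = r then det B else 0)"
    if "i < k" for i
  proof -
    have "(B * adj_mat B) $$ (i, r) = (\<Sum>j<k. B $$ (i, j) * adj_mat B $$ (j, r))"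
      using B adj_mat(1)[OF B] that r by (simp add: scalar_prod_def lessThan_atLeast0)
    then show ?thesis
      using adj_mat(2)[OF B] that r by (cases "i = r") simp_all
  qed
  have "(\<Sum>j<k. adj_mat B $$ (j, r) * det (replace_col A (col B j) p))
      = (\<Sum>j<k. \<Sum>i<k. cofactor A i p * (B $$ (i, j) * adj_mat B $$ (j, r)))"
    using A B p by (simp add: det_replace_col_eq_sum_cofactor sum_distrib_left ac_simps)
  also have "\<dots> = (\<Sum>i<k. cofactor A i p * (if i = r then det B else 0))"
    by (subst sum.swap) (simp add: sum_distrib_left[symmetric] B_adj)
  also have "\<dots> = det B * cofactor A r p"
    using r by (simp add: if_distrib[of "\<lambda>x. _ * x"] mult.commute cong: if_cong)
  finally show ?thesis ..
qed

definition cols_mat :: "'a mat \<Rightarrow> (nat \<Rightarrow> nat) \<Rightarrow> 'a mat" where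
  "cols_mat A f = mat (dim_row A) (dim_row A) (\<lambda>(i, j). A $$ (i, f j))"

definition window_with :: "nat \<Rightarrow> nat \<Rightarrow> nat \<Rightarrow> nat \<Rightarrow> nat" where
  "window_with m s c j = (if j < m - 1 then s + j else c)"

text \<open>The generators of Q_(s+1) = I_(m-1)(X_[s+1, s+m-1]); in the 0-based column indices used by
  cols_mat and window_with these are the columns s, ..., s+m-2.\<close>

definition window_minors :: "'a::comm_ring_1 mat \<Rightarrow> nat \<Rightarrow> nat \<Rightarrow> 'a set" where
  "window_minors A m s = minors (m - 1) (colsub A (s + 1) (s + m - 1))"

lemma window_with_less: "s + m - 1 \<le> n \<Longrightarrow> c < n \<Longrightarrow> window_with m s c j < n"
  by (auto simp: window_with_def)

lemma dim_cols_mat [simp]: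
  "dim_row (cols_mat A f) = dim_row A" "dim_col (cols_mat A f) = dim_row A"
  by (simp_all add: cols_mat_def)

lemma cols_mat_carrier: "A \<in> carrier_mat m n \<Longrightarrow> cols_mat A f \<in> carrier_mat m m"
  by (simp add: cols_mat_def)

lemma cols_mat_cong: "(\<And>j. j < dim_row A \<Longrightarrow> f j = h j) \<Longrightarrow> cols_mat A f = cols_mat A h"
  by (intro eq_matI) (auto simp: cols_mat_def)

lemma colsub_eq_cols_mat: "colsub A (s + 1) (s + dim_row A) = cols_mat A (\<lambda>j. s + j)"
  by (intro eq_matI) (auto simp: colsub_def cols_mat_def)

lemma replace_col_cols_mat:
  assumes "p < dim_row A" "j < dim_row A"
  shows "replace_col (cols_mat A f) (col (cols_mat A h) j) p = cols_mat A (f(p := h j))"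
  using assms by (intro eq_matI) (auto simp: cols_mat_def replace_col_def)

lemma det_cols_mat_repeated:
  assumes "A \<in> carrier_mat m n" "p < m" "q < m" "p \<noteq> q" "f p = f q"
  shows "det (cols_mat A f) = 0"
  using assms by (intro det_identical_columns[of "cols_mat A f" m p q])
    (auto intro!: eq_vecI simp: cols_mat_def)

lemma det_cols_mat_rotate:
  assumes A: "A \<in> carrier_mat m n" and "0 < m"
  shows "det (cols_mat A (\<lambda>j. s + j)) = (- 1) ^ (m - 1) * det (cols_mat A (window_with m (Suc s) s))"
proof -
  have "swap_col_to_front (cols_mat A (window_with m (Suc s) s)) (m - 1) = cols_mat A (\<lambda>j. s + j)"
    using A \<open>0 < m\<close> by (subst swap_col_to_front_result[OF cols_mat_carrier[OF A]])
      (auto intro!: eq_matI simp: cols_mat_def window_with_def)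
  moreover have "det (swap_col_to_front (cols_mat A (window_with m (Suc s) s)) (m - 1))
      = (- 1) ^ (m - 1) * det (cols_mat A (window_with m (Suc s) s))"
    using \<open>0 < m\<close> by (intro swap_col_to_front_det[OF cols_mat_carrier[OF A]]) simp
  ultimately show ?thesis
    by simp
qed

lemma sorted_list_of_set_lessThan_remove:
  "r < m \<Longrightarrow> sorted_list_of_set ({..<m} - {r}) = [0..<r] @ [Suc r..<m]"
  by (rule sorted_distinct_set_unique[symmetric]) (auto simp: sorted_append)

lemma window_minor_eq_det_mat_delete:
  assumes A: "A \<in> carrier_mat m n" and "0 < m"
    and g: "g \<in> window_minors A m s"
  obtains r where "r < m" "g = det (mat_delete (cols_mat A (window_with m s c)) r (m - 1))"
proof -
  let ?C = "colsub A (s + 1) (s + m - 1)"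
  have dims: "dim_row ?C = m" "dim_col ?C = m - 1"
    using A \<open>0 < m\<close> by (auto simp: colsub_def)
  obtain Rs Cs
    where g: "g = det (mat (m - 1) (m - 1)
        (\<lambda>(a, b). ?C $$ (sorted_list_of_set Rs ! a, sorted_list_of_set Cs ! b)))"
      and Rs: "Rs \<subseteq> {..<m}" "card Rs = m - 1" and Cs: "Cs \<subseteq> {..<m - 1}" "card Cs = m - 1"
    using g unfolding window_minors_def minors_def dims by blast
  have Cs_eq: "Cs = {..<m - 1}"
    using Cs by (intro card_subset_eq) auto
  have "Rs \<noteq> {..<m}"
    using Rs \<open>0 < m\<close> by auto
  then obtain r where r: "r < m" "r \<notin> Rs"
    using Rs by auto
  have Rs_eq: "Rs = {..<m} - {r}"
    using Rs r by (intro card_subset_eq) auto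
  have "sorted_list_of_set Rs ! i = (if i < r then i else Suc i)" if "i < m - 1" for i
    using that r unfolding Rs_eq sorted_list_of_set_lessThan_remove[OF r(1)] by (auto simp: nth_append)
  then have "g = det (mat_delete (cols_mat A (window_with m s c)) r (m - 1))"
    unfolding g Cs_eq using A
    by (intro arg_cong[of _ _ det] eq_matI)
      (auto simp: mat_delete_def cols_mat_def window_with_def colsub_def lessThan_atLeast0)
  with r show thesis
    using that by blast
qed

lemma maximal_minor_eq_det_cols_mat:
  assumes A: "A \<in> carrier_mat m n" and d: "d \<in> minors m A"
  obtains Cs where "Cs \<subseteq> {..<n}" "card Cs = m" "d = det (cols_mat A ((!) (sorted_list_of_set Cs)))"
proof -
  obtain Rs Cs
    where d: "d = det (mat m m
        (\<lambda>(a, b). A $$ (sorted_list_of_set Rs ! a, sorted_list_of_set Cs ! b)))"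
      and Rs: "Rs \<subseteq> {..<m}" "card Rs = m" and Cs: "Cs \<subseteq> {..<n}" "card Cs = m"
    using A d unfolding minors_def by auto
  have "Rs = {..<m}"
    using Rs by (intro card_subset_eq) auto
  then have "d = det (cols_mat A ((!) (sorted_list_of_set Cs)))"
    unfolding d using A
    by (intro arg_cong[of _ _ det] eq_matI) (auto simp: cols_mat_def lessThan_atLeast0)
  with Cs show thesis
    using that by blast
qed

lemma list_all2_map_upt_prod_list:
  assumes gs: "list_all2 (\<in>) gs (map G [a..<b])"
  obtains g where "\<And>v. v \<in> {a..<b} \<Longrightarrow> g v \<in> G v" "prod_list gs = (\<Prod>v\<in>{a..<b}. g v)"
proof
  have len: "length gs = b - a"
    using list_all2_lengthD[OF gs] by simp
  show "gs ! (v - a) \<in> G v" if "v \<in> {a..<b}" for v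
    using list_all2_nthD[OF gs, of "v - a"] len that by auto
  have "prod_list gs = (\<Prod>i = 0..<b - a. gs ! i)"
    by (simp add: prod.list_conv_set_nth len)
  also have "\<dots> = (\<Prod>v = a..<b. gs ! (v - a))"
    by (rule prod.reindex_bij_witness[of _ "\<lambda>v. v - a" "\<lambda>i. i + a"]) auto
  finally show "prod_list gs = (\<Prod>v\<in>{a..<b}. gs ! (v - a))" .
qed

lemma neg_one_power_mult_cancel: "(- 1) ^ k * ((- 1) ^ k * x) = (x :: 'a::comm_ring_1)"
  by (simp add: mult.assoc[symmetric] power_mult_distrib[symmetric])

locale matrix_over_subring =
  fixes R :: "'a::comm_ring_1 set" and A :: "'a mat" and m n :: nat
  assumes subring: "is_subring R"
    and carrier: "A \<in> carrier_mat m n"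
    and entries: "\<And>i j. i < m \<Longrightarrow> j < n \<Longrightarrow> A $$ (i, j) \<in> R"
    and rows_pos: "0 < m"
begin

lemma cols_mat_entries_in_subring:
  "(\<And>j. j < m \<Longrightarrow> f j < n) \<Longrightarrow> i < m \<Longrightarrow> j < m \<Longrightarrow> cols_mat A f $$ (i, j) \<in> R"
  using carrier by (simp add: cols_mat_def entries)

lemma det_cols_mat_in_subring: "(\<And>j. j < m \<Longrightarrow> f j < n) \<Longrightarrow> det (cols_mat A f) \<in> R"
  by (intro det_in_subring[OF subring cols_mat_carrier[OF carrier]] cols_mat_entries_in_subring)

lemma cofactor_cols_mat_in_subring:
  "(\<And>j. j < m \<Longrightarrow> f j < n) \<Longrightarrow> r < m \<Longrightarrow> q < m \<Longrightarrow> cofactor (cols_mat A f) r q \<in> R"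
  by (intro cofactor_in_subring[OF subring cols_mat_carrier[OF carrier]] cols_mat_entries_in_subring)

lemma window_minors_subset_subring: "s + m - 1 \<le> n \<Longrightarrow> window_minors A m s \<subseteq> R"
  unfolding window_minors_def using carrier rows_pos
  by (intro minors_subset_subring[OF subring]) (auto simp: colsub_def entries)

lemma maximal_minors_subset_subring: "minors m A \<subseteq> R"
  using carrier by (intro minors_subset_subring[OF subring]) (auto simp: entries)

lemma window_minor_mult_det_cols_mat:
  assumes "s + m - 1 \<le> n"
    and g: "g \<in> window_minors A m s"
    and f: "\<And>j. j < m \<Longrightarrow> f j < n"
  shows "g * det (cols_mat A f) \<in> ideal_gen R {det (cols_mat A (window_with m s (f j))) | j. j < m}"
proof -
  let ?W = "cols_mat A (window_with m s 0)" and ?B = "cols_mat A f"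
  let ?G = "{det (cols_mat A (window_with m s (f j))) | j. j < m}"
  obtain r where r: "r < m" and g_det: "g = det (mat_delete ?W r (m - 1))"
    using window_minor_eq_det_mat_delete[OF carrier rows_pos g] .
  define e :: 'a where "e = (- 1) ^ (r + (m - 1))"
  have g_cofactor: "g = e * cofactor ?W r (m - 1)"
    by (simp add: g_det e_def cofactor_def neg_one_power_mult_cancel)
  have replace: "replace_col ?W (col ?B j) (m - 1) = cols_mat A (window_with m s (f j))"
    if "j < m" for j
    using carrier that rows_pos
    by (subst replace_col_cols_mat) (auto intro!: cols_mat_cong simp: window_with_def)
  have "g * det ?B = e * (det ?B * cofactor ?W r (m - 1))"
    by (simp add: g_cofactor ac_simps)
  also have "\<dots> = e * (\<Sum>j<m. adj_mat ?B $$ (j, r) * det (replace_col ?W (col ?B j) (m - 1)))"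
    using rows_pos r cols_mat_carrier[OF carrier]
    by (subst det_mult_cofactor_eq_sum_replace_col) auto
  also have "\<dots> = (\<Sum>j<m. (e * cofactor ?B r j) * det (cols_mat A (window_with m s (f j))))"
    unfolding sum_distrib_left
  proof (intro sum.cong refl)
    fix j assume "j \<in> {..<m}"
    moreover have "adj_mat ?B $$ (j, r) = cofactor ?B r j"
      using carrier \<open>j \<in> {..<m}\<close> r by (simp add: adj_mat_def)
    ultimately show "e * (adj_mat ?B $$ (j, r) * det (replace_col ?W (col ?B j) (m - 1)))
        = e * cofactor ?B r j * det (cols_mat A (window_with m s (f j)))"
      using replace[of j] by (simp add: mult.assoc)
  qed
  also have "\<dots> \<in> ideal_gen R ?G"
  proof (rule ideal_in_sum)
    show G: "is_ideal_in R (ideal_gen R ?G)"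
      using assms by (intro ideal_gen_is_ideal[OF subring])
        (auto intro!: det_cols_mat_in_subring window_with_less)
    fix j assume "j \<in> {..<m}"
    then have "cofactor ?B r j \<in> R"
      using r f by (intro cofactor_cols_mat_in_subring) auto
    then have "e * cofactor ?B r j \<in> R"
      unfolding e_def by (intro is_subring_mult[OF subring is_subring_neg_one_power[OF subring]])
    moreover have "det (cols_mat A (window_with m s (f j))) \<in> ideal_gen R ?G"
      using \<open>j \<in> {..<m}\<close> by (intro subsetD[OF ideal_gen_superset]) auto
    ultimately show "(e * cofactor ?B r j) * det (cols_mat A (window_with m s (f j)))
        \<in> ideal_gen R ?G"
      by (rule ideal_in_mult_left[OF G])
  qed
  finally show ?thesis .
qed

end

locale consecutive_minors_ideal = matrix_over_subring +
  fixes K :: "'a::comm_ring_1 set"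
  assumes ideal: "is_ideal_in R K"
    and consecutive: "\<And>s. s + m \<le> n \<Longrightarrow> det (cols_mat A (\<lambda>j. s + j)) \<in> K"
begin

lemma det_window_with_in_ideal:
  assumes "s \<le> c + 1" "c < s + m" "c < n" "s + m - 1 \<le> n"
  shows "det (cols_mat A (window_with m s c)) \<in> K"
proof -
  consider "c + 1 = s" | "s \<le> c" "c < s + m - 1" | "c = s + m - 1"
    using assms by linarith
  then show ?thesis
  proof cases
    case 1
    have "det (cols_mat A (window_with m s c)) = (- 1) ^ (m - 1) * det (cols_mat A (\<lambda>j. c + j))"
      using det_cols_mat_rotate[OF carrier rows_pos, of c] 1 by (simp add: neg_one_power_mult_cancel)
    moreover have "det (cols_mat A (\<lambda>j. c + j)) \<in> K"
      using 1 assms by (intro consecutive) simp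
    ultimately show ?thesis
      using ideal_in_mult_left[OF ideal is_subring_neg_one_power[OF subring]] by simp
  next
    case 2
    then have "window_with m s c (c - s) = window_with m s c (m - 1)"
      by (simp add: window_with_def)
    moreover have "c - s < m - 1"
      using 2 by linarith
    ultimately have "det (cols_mat A (window_with m s c)) = 0"
      using rows_pos by (intro det_cols_mat_repeated[OF carrier, of "c - s" "m - 1"]) auto
    then show ?thesis
      using ideal_in_zero[OF ideal] by simp
  next
    case 3
    then have "cols_mat A (window_with m s c) = cols_mat A (\<lambda>j. s + j)"
      using carrier by (intro cols_mat_cong) (auto simp: window_with_def)
    then show ?thesis
      using 3 assms consecutive[of s] by simp
  qed
qed

context
  fixes g :: "nat \<Rightarrow> 'a"
  assumes window_minor: "\<And>v. v \<in> {1..n - m} \<Longrightarrow> g v \<in> window_minors A m v"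
begin

lemma prod_window_minors_in_subring: "S \<subseteq> {1..n - m} \<Longrightarrow> (\<Prod>v\<in>S. g v) \<in> R"
  using window_minor window_minors_subset_subring by (intro is_subring_prod[OF subring]) force

lemma prod_mult_det_cols_mat_in_ideal_by_expansion:
  assumes "u \<in> S" "S \<subseteq> {1..n - m}" and f: "\<And>j. j < m \<Longrightarrow> f j < n"
    and expanded: "\<And>j. j < m \<Longrightarrow>
      (\<Prod>v\<in>S - {u}. g v) * det (cols_mat A (window_with m u (f j))) \<in> K"
  shows "(\<Prod>v\<in>S. g v) * det (cols_mat A f) \<in> K"
proof -
  have u: "u \<in> {1..n - m}" and "finite S"
    using assms(1,2) finite_subset by auto
  then have "u + m - 1 \<le> n"
    by auto
  have "(\<Prod>v\<in>S - {u}. g v) * (g u * det (cols_mat A f)) \<in> K"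
  proof (rule mult_ideal_gen_in_ideal[OF subring ideal])
    show "{det (cols_mat A (window_with m u (f j))) | j. j < m} \<subseteq> R"
      using \<open>u + m - 1 \<le> n\<close> f by (auto intro!: det_cols_mat_in_subring window_with_less)
    show "g u * det (cols_mat A f)
        \<in> ideal_gen R {det (cols_mat A (window_with m u (f j))) | j. j < m}"
      using \<open>u + m - 1 \<le> n\<close> window_minor[OF u] f by (rule window_minor_mult_det_cols_mat)
  qed (use expanded in auto)
  then show ?thesis
    using prod.remove[OF \<open>finite S\<close> \<open>u \<in> S\<close>, of g] by (simp add: ac_simps)
qed

lemma prod_mult_det_window_with_in_ideal:
  assumes "s \<le> c + 1" "c < n" "s + m - 1 \<le> n" "{s + 1..c + 1 - m} \<subseteq> S" "S \<subseteq> {1..n - m}"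
  shows "(\<Prod>v\<in>S. g v) * det (cols_mat A (window_with m s c)) \<in> K"
  using assms
proof (induction "c - s" arbitrary: s S rule: less_induct)
  case less
  have prod_S: "(\<Prod>v\<in>T. g v) \<in> R" if "T \<subseteq> S" for T
    using that less.prems(5) by (intro prod_window_minors_in_subring) auto
  show ?case
  proof (cases "c < s + m")
    case True
    then show ?thesis
      using less.prems det_window_with_in_ideal prod_S[of S] ideal_in_mult_left[OF ideal] by blast
  next
    case False
    show ?thesis
    proof (rule prod_mult_det_cols_mat_in_ideal_by_expansion)
      show "s + 1 \<in> S" "S \<subseteq> {1..n - m}"
        using less.prems False by auto
      show "window_with m s c j < n" for j
        using less.prems by (intro window_with_less)
    next
      fix j assume "j < m"
      show "(\<Prod>v\<in>S - {s + 1}. g v) * det (cols_mat A (window_with m (s + 1) (window_with m s c j)))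
          \<in> K"
      proof (cases "j < m - 1")
        case True
        then have "det (cols_mat A (window_with m (s + 1) (s + j))) \<in> K"
          using False less.prems by (intro det_window_with_in_ideal) auto
        then show ?thesis
          using True prod_S[of "S - {s + 1}"] ideal_in_mult_left[OF ideal] by (simp add: window_with_def)
      next
        case False
        then have "window_with m s c j = c"
          by (simp add: window_with_def)
        moreover have "(\<Prod>v\<in>S - {s + 1}. g v) * det (cols_mat A (window_with m (s + 1) c)) \<in> K"
          using \<open>\<not> c < s + m\<close> less.prems rows_pos by (intro less.hyps) auto
        ultimately show ?thesis
          by simp
      qed
    qed
  qed
qed

lemma prod_mult_maximal_minor_in_ideal:
  assumes d: "d \<in> minors m A"
  shows "(\<Prod>v\<in>{1..n - m}. g v) * d \<in> K"
proof -
  obtain Cs where Cs: "Cs \<subseteq> {..<n}" "card Cs = m"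
    and d_eq: "d = det (cols_mat A ((!) (sorted_list_of_set Cs)))"
    using maximal_minor_eq_det_cols_mat[OF carrier d] .
  have f: "sorted_list_of_set Cs ! j < n" if "j < m" for j
    using Cs that sorted_list_of_set_nth_mem[of Cs j] finite_subset[OF Cs(1)] by auto
  show ?thesis
  proof (cases "m < n")
    case False
    then have "Cs = {..<m}"
      using Cs card_mono[OF _ Cs(1)] by (intro card_subset_eq) auto
    then have "d = det (cols_mat A (\<lambda>j. 0 + j))"
      unfolding d_eq using carrier
      by (intro arg_cong[of _ _ det] cols_mat_cong) (simp add: lessThan_atLeast0)
    then show ?thesis
      using False consecutive[of 0] card_mono[OF _ Cs(1)] Cs by simp
  next
    case True
    show ?thesis
      unfolding d_eq
    proof (rule prod_mult_det_cols_mat_in_ideal_by_expansion)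
      show "1 \<in> {1..n - m}"
        using True by simp
      fix j assume "j < m"
      then show "(\<Prod>v\<in>{1..n - m} - {1}. g v)
          * det (cols_mat A (window_with m 1 (sorted_list_of_set Cs ! j))) \<in> K"
        using f[OF \<open>j < m\<close>] True by (intro prod_mult_det_window_with_in_ideal) auto
    qed (use f in auto)
  qed
qed

end

lemma prod_window_minor_ideals_subset_colon:
  "ideal_prod_list R (map (ideal_gen R) (map (window_minors A m) [1..<n - m + 1]))
     \<subseteq> ideal_colon R K (ideal_gen R (minors m A))"
proof -
  let ?Ss = "map (window_minors A m) [1..<n - m + 1]"
  have "window_minors A m v \<subseteq> R" if "1 \<le> v" "v \<le> n - m" for v
    using that by (intro window_minors_subset_subring) simp
  then have Ss: "\<forall>S\<in>set ?Ss. S \<subseteq> R"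
    by (auto simp del: upt_Suc)
  have "{prod_list gs | gs. list_all2 (\<in>) gs ?Ss} \<subseteq> ideal_colon R K (ideal_gen R (minors m A))"
  proof
    fix x assume "x \<in> {prod_list gs | gs. list_all2 (\<in>) gs ?Ss}"
    then obtain gs where x: "x = prod_list gs" and gs: "list_all2 (\<in>) gs ?Ss"
      by blast
    have "{1..<n - m + 1} = {1..n - m}"
      by (simp add: atLeastLessThanSuc_atLeastAtMost)
    then obtain g where g: "\<And>v. v \<in> {1..n - m} \<Longrightarrow> g v \<in> window_minors A m v"
      and prod_gs: "prod_list gs = (\<Prod>v\<in>{1..n - m}. g v)"
      using list_all2_map_upt_prod_list[OF gs] by metis
    have "prod_list gs * d \<in> K" if "d \<in> minors m A" for d
      unfolding prod_gs using g that by (rule prod_mult_maximal_minor_in_ideal)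
    then have "prod_list gs * a \<in> K" if "a \<in> ideal_gen R (minors m A)" for a
      using that by (rule mult_ideal_gen_in_ideal[OF subring ideal maximal_minors_subset_subring])
    moreover have "prod_list gs \<in> R"
      using is_subring_prod_list[OF subring gs Ss] .
    ultimately show "x \<in> ideal_colon R K (ideal_gen R (minors m A))"
      by (simp add: x ideal_colon_def)
  qed
  then have "ideal_gen R {prod_list gs | gs. list_all2 (\<in>) gs ?Ss}
      \<subseteq> ideal_colon R K (ideal_gen R (minors m A))"
    by (rule ideal_gen_least[OF ideal_colon_is_ideal[OF subring ideal]])
  with ideal_prod_list_subset_ideal_gen[OF subring Ss] show ?thesis
    by (rule order_trans)
qed

end

lemma polyring_is_subring: "is_subring (polyring m n :: 'a::comm_ring_1 mpoly set)"
proof -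
  have vars: "Poly_Mapping.keys \<mu> \<subseteq> {..<m} \<times> {..<n}"
    if "\<mu> \<in> Poly_Mapping.keys q" "q \<in> polyring m n" for \<mu> and q :: "'a mpoly"
    using that by (simp add: polyring_def)
  have add: "p + q \<in> polyring m n" if "p \<in> polyring m n" "q \<in> polyring m n" for p q :: "'a mpoly"
    using that Poly_Mapping.keys_add[of p q] vars unfolding polyring_def by blast
  have mult: "p * q \<in> polyring m n" if "p \<in> polyring m n" "q \<in> polyring m n" for p q :: "'a mpoly"
  proof -
    have "Poly_Mapping.keys (a + b) \<subseteq> {..<m} \<times> {..<n}"
      if "a \<in> Poly_Mapping.keys p" "b \<in> Poly_Mapping.keys q" for a b
      using Poly_Mapping.keys_add[of a b] vars[OF _ \<open>p \<in> _\<close>] vars[OF _ \<open>q \<in> _\<close>] that by blast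
    then show ?thesis
      using keys_mult[of p q] unfolding polyring_def by blast
  qed
  have uminus: "- p \<in> polyring m n" if "p \<in> polyring m n" for p :: "'a mpoly"
    using that unfolding polyring_def by simp
  have "0 \<in> polyring m n" "1 \<in> polyring m n"
    unfolding polyring_def by simp_all
  with add mult uminus show ?thesis
    unfolding is_subring_def by blast
qed

lemma genmat_consecutive_minors_ideal:
  assumes "0 < m" "m \<le> n"
  shows "consecutive_minors_ideal (polyring m n) (genmat m n :: 'a::comm_ring_1 mpoly mat) m n
    (ideal_gen (polyring m n)
      {det (colsub (genmat m n) i (i + (m - 1))) | i. 1 \<le> i \<and> i \<le> n - (m - 1)})"
    (is "consecutive_minors_ideal ?P ?X m n (ideal_gen ?P ?gens)")
proof -
  have M: "matrix_over_subring ?P ?X m n"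
  proof
    show "is_subring ?P"
      by (rule polyring_is_subring)
    show "?X \<in> carrier_mat m n"
      by (simp add: genmat_def)
    show "?X $$ (i, j) \<in> ?P" if "i < m" "j < n" for i j
      using that by (simp add: genmat_def xvar_def polyring_def)
  qed (rule \<open>0 < m\<close>)
  interpret matrix_over_subring ?P ?X m n
    by (fact M)
  have colsub_X: "colsub ?X (s + 1) (s + 1 + (m - 1)) = cols_mat ?X (\<lambda>j. s + j)" for s
    using colsub_eq_cols_mat[of ?X s] carrier rows_pos by simp
  have gens: "?gens \<subseteq> ?P"
  proof clarify
    fix i assume "1 \<le> i" "i \<le> n - (m - 1)"
    then show "det (colsub ?X i (i + (m - 1))) \<in> ?P"
      using colsub_X[of "i - 1"] by (auto intro!: det_cols_mat_in_subring)
  qed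
  show ?thesis
  proof (intro consecutive_minors_ideal.intro[OF M] consecutive_minors_ideal_axioms.intro)
    show "is_ideal_in ?P (ideal_gen ?P ?gens)"
      by (rule ideal_gen_is_ideal[OF subring gens])
    show "det (cols_mat ?X (\<lambda>j. s + j)) \<in> ideal_gen ?P ?gens" if "s + m \<le> n" for s
      using that colsub_X[of s] rows_pos
      by (intro subsetD[OF ideal_gen_superset]) (auto intro!: exI[of _ "s + 1"])
  qed
qed

theorem proposition4p3:
  fixes m n t :: nat
  assumes "2 \<le> m" and "m \<le> n" and "t = m - 1"
  defines "P \<equiv> (polyring m n :: 'a::field mpoly set)"
      and "X \<equiv> (genmat m n :: 'a mpoly mat)"
  defines "I \<equiv> minor_ideal P m X"
      and "J \<equiv> ideal_gen P {det (colsub X i (i + t)) | i. 1 \<le> i \<and> i \<le> n - t}"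
      and "Q \<equiv> (\<lambda>i. minor_ideal P t (colsub X i (i + t - 1)))"
  shows "ideal_prod_list P (map Q [2..<n - t + 1]) \<subseteq> ideal_colon P J I"
proof -
  interpret consecutive_minors_ideal P X m n J
    unfolding P_def X_def J_def \<open>t = m - 1\<close>
    using \<open>2 \<le> m\<close> \<open>m \<le> n\<close> by (intro genmat_consecutive_minors_ideal) simp_all
  have "n - t + 1 = Suc (n - m + 1)"
    using \<open>t = m - 1\<close> \<open>2 \<le> m\<close> \<open>m \<le> n\<close> by simp
  then have "[2..<n - t + 1] = map Suc [1..<n - m + 1]"
    by (simp only: map_Suc_upt One_nat_def numeral_2_eq_2)
  moreover have "Q (Suc v) = ideal_gen P (window_minors X m v)" for v
    using \<open>t = m - 1\<close> \<open>2 \<le> m\<close> by (simp add: Q_def window_minors_def minor_ideal_def)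
  ultimately have "map Q [2..<n - t + 1]
      = map (ideal_gen P) (map (window_minors X m) [1..<n - m + 1])"
    by simp
  with prod_window_minor_ideals_subset_colon show ?thesis
    by (simp add: I_def minor_ideal_def)
qed

end
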